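(* Let $G$ be a 2-tree on $n$ vertices with a fixed construction sequence, and let $v_1,\ldots,v_n$ be an ordering of $V(G)$ such that the graph obtained from $G$ by adding the edges $v_kv_{k+1}$ ($1\le k<n$) and $v_nv_1$ that are not already present has a plane embedding in which $(v_1,\ldots,v_n)$ is a one-sided Hamiltonian cycle with special edge $v_nv_1$. Then for every edge $e$ of $G$, $|X_R(e)|\le 2$.
   Context: A 2-tree is built from $K_3$ by repeatedly stacking a new vertex over an existing edge $xy$ (making it adjacent exactly to $x$ and $y$); fix such a construction sequence. For an edge $e$, $X(e)$ is the set of vertices stacked over $e$ in this sequence, and $S(e)$ is the set of edges created by these stackings (each joins an endpoint of $e$ to a vertex of $X(e)$). For $e=v_iv_j$ with $i<j$: $X_L(e)=\{v_k\in X(e): k<i\}$, $X_M(e)=\{v_k\in X(e): i<k<j\}$, $X_R(e)=\{v_k\in X(e): k>j\}$. One-sided Hamiltonian cycle: a plane graph on $n\ge3$ vertices has one with special edge $v_nv_1$ if $(v_1,\ldots,v_n)$ is a Hamiltonian cycle, $v_nv_1$ is on the outer face, and, with $D$ the closed bounded region bounded by the cycle, for every $j\in\{2,\ldots,n\}$ the non-cycle edges joining $v_j$ to some $v_i$ with $i<j$ are all in the interior of $D$ or all in the exterior of $D$. *)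

theory Defs
  imports "HOL-Analysis.Analysis"
begin

(* 2-trees via an explicit construction sequence: start with triangle a b c,
   then a list of steps (w,x,y) meaning: stack new vertex w over existing edge {x,y}. *)

definition tri_edges :: "'a \<Rightarrow> 'a \<Rightarrow> 'a \<Rightarrow> 'a set set" where
  "tri_edges a b c = {{a,b},{b,c},{a,c}}"

fun valid_stack :: "'a set \<Rightarrow> 'a set set \<Rightarrow> ('a \<times> 'a \<times> 'a) list \<Rightarrow> bool" where
  "valid_stack V E [] = True"
| "valid_stack V E ((w,x,y) # s) =
     (w \<notin> V \<and> {x,y} \<in> E \<and> valid_stack (insert w V) (E \<union> {{w,x},{w,y}}) s)"

fun stack_verts :: "'a set \<Rightarrow> ('a \<times> 'a \<times> 'a) list \<Rightarrow> 'a set" where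
  "stack_verts V [] = V"
| "stack_verts V ((w,x,y) # s) = stack_verts (insert w V) s"

fun stack_edges :: "'a set set \<Rightarrow> ('a \<times> 'a \<times> 'a) list \<Rightarrow> 'a set set" where
  "stack_edges E [] = E"
| "stack_edges E ((w,x,y) # s) = stack_edges (E \<union> {{w,x},{w,y}}) s"

definition is_2tree_construction :: "'a \<Rightarrow> 'a \<Rightarrow> 'a \<Rightarrow> ('a \<times> 'a \<times> 'a) list \<Rightarrow> bool" where
  "is_2tree_construction a b c s \<longleftrightarrow>
     a \<noteq> b \<and> b \<noteq> c \<and> a \<noteq> c \<and> valid_stack {a,b,c} (tri_edges a b c) s"

definition tt_V :: "'a \<Rightarrow> 'a \<Rightarrow> 'a \<Rightarrow> ('a \<times> 'a \<times> 'a) list \<Rightarrow> 'a set" where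
  "tt_V a b c s = stack_verts {a,b,c} s"

definition tt_E :: "'a \<Rightarrow> 'a \<Rightarrow> 'a \<Rightarrow> ('a \<times> 'a \<times> 'a) list \<Rightarrow> 'a set set" where
  "tt_E a b c s = stack_edges (tri_edges a b c) s"

definition stacked_over :: "('a \<times> 'a \<times> 'a) list \<Rightarrow> 'a set \<Rightarrow> 'a set" where
  "stacked_over s e = {w. \<exists>x y. (w,x,y) \<in> set s \<and> e = {x,y}}"

(* X_R(e) for e = v_i v_j, i < j, w.r.t. ordering v_1..v_n *)
definition X_R :: "(nat \<Rightarrow> 'a) \<Rightarrow> nat \<Rightarrow> ('a \<times> 'a \<times> 'a) list \<Rightarrow> nat \<Rightarrow> nat \<Rightarrow> 'a set" where
  "X_R v n s i j = {v k | k. j < k \<and> k \<le> n \<and> v k \<in> stacked_over s {v i, v j}}"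

definition cycle_edges :: "(nat \<Rightarrow> 'a) \<Rightarrow> nat \<Rightarrow> 'a set set" where
  "cycle_edges v n = {{v k, v (Suc k)} | k. 1 \<le> k \<and> k < n} \<union> {{v n, v 1}}"

definition plane_embedding ::
  "'a set \<Rightarrow> 'a set set \<Rightarrow> ('a \<Rightarrow> complex) \<Rightarrow> ('a set \<Rightarrow> real \<Rightarrow> complex) \<Rightarrow> bool" where
  "plane_embedding V E pos \<gamma> \<longleftrightarrow>
     inj_on pos V \<and>
     (\<forall>e\<in>E. \<exists>x y. e = {x,y} \<and> x \<noteq> y \<and> x \<in> V \<and> y \<in> V \<and> arc (\<gamma> e) \<and>
        ((pathstart (\<gamma> e) = pos x \<and> pathfinish (\<gamma> e) = pos y) \<or>
         (pathstart (\<gamma> e) = pos y \<and> pathfinish (\<gamma> e) = pos x)) \<and>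
        path_image (\<gamma> e) \<inter> pos ` V = {pos x, pos y}) \<and>
     (\<forall>e\<in>E. \<forall>f\<in>E. e \<noteq> f \<longrightarrow> path_image (\<gamma> e) \<inter> path_image (\<gamma> f) \<subseteq> pos ` (e \<inter> f))"

definition drawing_image :: "'a set \<Rightarrow> 'a set set \<Rightarrow> ('a \<Rightarrow> complex) \<Rightarrow> ('a set \<Rightarrow> real \<Rightarrow> complex) \<Rightarrow> complex set" where
  "drawing_image V E pos \<gamma> = pos ` V \<union> (\<Union>e\<in>E. path_image (\<gamma> e))"

definition open_edge :: "('a \<Rightarrow> complex) \<Rightarrow> ('a set \<Rightarrow> real \<Rightarrow> complex) \<Rightarrow> 'a set \<Rightarrow> complex set" where
  "open_edge pos \<gamma> e = path_image (\<gamma> e) - pos ` e"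

definition one_sided_ham_cycle ::
  "'a set \<Rightarrow> 'a set set \<Rightarrow> ('a \<Rightarrow> complex) \<Rightarrow> ('a set \<Rightarrow> real \<Rightarrow> complex) \<Rightarrow> (nat \<Rightarrow> 'a) \<Rightarrow> nat \<Rightarrow> bool" where
  "one_sided_ham_cycle V E pos \<gamma> v n \<longleftrightarrow>
     3 \<le> n \<and> bij_betw v {1..n} V \<and> cycle_edges v n \<subseteq> E \<and>
     plane_embedding V E pos \<gamma> \<and>
     path_image (\<gamma> {v n, v 1}) \<subseteq> closure (outside (drawing_image V E pos \<gamma>)) \<and>
     (let C = (\<Union>e\<in>cycle_edges v n. path_image (\<gamma> e));
          D = C \<union> inside C
      in \<forall>j\<in>{2..n}.
          (\<forall>i\<in>{1..<j}. {v i, v j} \<in> E - cycle_edges v n \<longrightarrow> open_edge pos \<gamma> {v i, v j} \<subseteq> interior D) \<or>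
          (\<forall>i\<in>{1..<j}. {v i, v j} \<in> E - cycle_edges v n \<longrightarrow> open_edge pos \<gamma> {v i, v j} \<subseteq> - D))"

end

theory Submission
  imports Defs
begin

text \<open>
  Every vertex \<open>v\<^sub>k\<close> of \<open>X\<^sub>R(v\<^sub>iv\<^sub>j)\<close> is adjacent to both \<open>v\<^sub>i\<close> and \<open>v\<^sub>j\<close>.
  For two such vertices \<open>k < l\<close> the edges \<open>v\<^sub>iv\<^sub>k\<close> and \<open>v\<^sub>jv\<^sub>l\<close> are disjoint
  chords of the Hamiltonian cycle whose ends interleave along it (\<open>i < j < k < l\<close>). Two such
  chords cannot lie in the same component of the complement of the cycle, a Jordan curve: they would
  have to cross. Since one-sidedness puts all back-chords of a vertex on the same side, the side chosen
  by \<open>v\<^sub>k\<close> is an injective function of \<open>k\<close> on \<open>X\<^sub>R\<close>, and there are only two sides.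
\<close>

section \<open>Theta curves\<close>

lemma arc_image_subset_closure_endless:
  assumes "arc c"
  shows "path_image c \<subseteq> closure (path_image c - {pathstart c, pathfinish c})"
proof -
  have "continuous_on {0..1} c"
    using assms arc_imp_path path_def by blast
  then have "c ` closure {0<..<1::real} \<subseteq> closure (c ` {0<..<1})"
    by (intro image_closure_subset)
      (auto simp: closure_greaterThanLessThan intro: closure_subset[THEN subsetD])
  then show ?thesis
    using simple_path_endless[OF arc_imp_simple_path[OF assms]]
    by (simp add: path_image_def closure_greaterThanLessThan)
qed

locale internally_disjoint_arcs =
  fixes p q :: complex and g h :: "real \<Rightarrow> complex"
  assumes arc_g: "arc g" and arc_h: "arc h"
    and g_ends: "pathstart g = p" "pathfinish g = q"
    and h_ends: "pathstart h = p" "pathfinish h = q"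
    and arcs_meet: "path_image g \<inter> path_image h = {p, q}"
begin

abbreviation curve :: "complex set" where
  "curve \<equiv> path_image g \<union> path_image h"

lemma swap: "internally_disjoint_arcs p q h g"
  using arc_g arc_h g_ends h_ends arcs_meet by unfold_locales auto

lemma ends_in_images: "p \<in> path_image g" "q \<in> path_image g" "p \<in> path_image h" "q \<in> path_image h"
  using g_ends h_ends pathstart_in_path_image pathfinish_in_path_image by metis+

lemma ends_distinct: "p \<noteq> q"
  using arc_g g_ends arc_distinct_ends by metis

lemma open_arc:
  "connected (path_image g - {p, q})" "path_image g - {p, q} \<noteq> {}"
  "path_image g \<subseteq> closure (path_image g - {p, q})"
  using connected_simple_path_endless nonempty_simple_path_endless arc_image_subset_closure_endless
    arc_imp_simple_path arc_g g_ends by metis+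

lemma simple_loop:
  "simple_path (g +++ reversepath h)" "pathfinish (g +++ reversepath h) = pathstart (g +++ reversepath h)"
  "path_image (g +++ reversepath h) = curve"
  using arc_g arc_h g_ends h_ends arcs_meet
  by (auto simp: simple_path_join_loop_eq arc_reversepath path_image_join)

lemma inside_curve_nonempty: "inside curve \<noteq> {}"
  using Jordan_inside_outside[OF simple_loop(1,2)] simple_loop(3) by simp

lemma connected_inside_curve: "connected (inside curve)"
  using Jordan_inside_outside[OF simple_loop(1,2)] simple_loop(3) by simp

lemma frontier_inside_curve: "frontier (inside curve) = curve"
  and frontier_outside_curve: "frontier (outside curve) = curve"
  using Jordan_inside_outside[OF simple_loop(1,2)] simple_loop(3) by simp_all

lemma compact_curve: "compact curve"
  using arc_g arc_h by (simp add: arc_imp_path compact_Un compact_path_image)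

lemma bounded_inside_curve: "bounded (inside curve)"
  by (rule bounded_inside[OF compact_imp_bounded[OF compact_curve]])

lemma connected_outside_curve: "connected (outside curve)"
  by (rule connected_outside[OF compact_imp_bounded[OF compact_curve]]) simp

lemma unbounded_outside_curve: "\<not> bounded (outside curve)"
  by (rule unbounded_outside[OF compact_imp_bounded[OF compact_curve]])

lemma open_inside_curve: "open (inside curve)"
  and open_outside_curve: "open (outside curve)"
  using compact_curve by (simp_all add: compact_imp_closed open_inside open_outside)

lemma closure_inside_curve: "closure (inside curve) = inside curve \<union> curve"
  and closure_outside_curve: "closure (outside curve) = outside curve \<union> curve"
  using frontier_inside_curve frontier_outside_curve closure_Un_frontier by metis+

lemma interior_curve_Un_inside: "interior (curve \<union> inside curve) = inside curve"
proof (rule antisym)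
  have "interior (curve \<union> inside curve) \<inter> outside curve = {}"
    using interior_subset outside_no_overlap[of curve] inside_Int_outside[of curve] by blast
  then have "interior (curve \<union> inside curve) \<inter> closure (outside curve) = {}"
    by (simp add: open_Int_closure_eq_empty)
  then show "interior (curve \<union> inside curve) \<subseteq> inside curve"
    using interior_subset closure_outside_curve by blast
qed (simp add: interior_maximal open_inside_curve)

lemma connected_side:
  assumes "connected S" "S \<inter> curve = {}"
  shows "S \<subseteq> inside curve \<or> S \<subseteq> outside curve"
proof -
  have "S \<subseteq> inside curve \<union> outside curve"
    using assms(2) by (auto simp: outside_inside)
  then show ?thesis
    using connectedD[OF assms(1) open_inside_curve open_outside_curve] inside_Int_outside by blast
qed

lemma subset_outside_if_closure_meets:
  assumes "connected S" "S \<inter> curve = {}" "z \<in> closure S" "z \<in> outside curve"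
  shows "S \<subseteq> outside curve"
proof (rule ccontr)
  assume "\<not> S \<subseteq> outside curve"
  then have "S \<subseteq> inside curve"
    using connected_side assms(1,2) by blast
  then have "z \<in> inside curve \<union> curve"
    using closure_mono assms(3) closure_inside_curve by blast
  then show False
    using assms(4) inside_Int_outside outside_no_overlap by blast
qed

lemma split_inside_by_arc:
  assumes gd: "internally_disjoint_arcs p q g d" and hd: "internally_disjoint_arcs p q h d"
    and meets: "path_image d \<inter> inside curve \<noteq> {}"
  shows "inside (path_image g \<union> path_image d) \<inter> inside (path_image h \<union> path_image d) = {}"
    "inside (path_image g \<union> path_image d) \<union> inside (path_image h \<union> path_image d) \<union>
       (path_image d - {p, q}) = inside curve"
proof -
  interpret GD: internally_disjoint_arcs p q g d by (rule gd)
  interpret HD: internally_disjoint_arcs p q h d by (rule hd)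
  show "inside GD.curve \<inter> inside HD.curve = {}"
    "inside GD.curve \<union> inside HD.curve \<union> (path_image d - {p, q}) = inside curve"
    by (rule split_inside_simple_closed_curve[of g p q h d];
        use arc_imp_simple_path arc_g arc_h GD.arc_h g_ends h_ends GD.h_ends ends_distinct arcs_meet
          GD.arcs_meet HD.arcs_meet meets in auto)+
qed

lemma connected_Compl_closed_regions:
  assumes kh: "internally_disjoint_arcs p q k h"
    and meet: "closure (inside curve) \<inter> closure (inside (path_image k \<union> path_image h)) = path_image h"
  shows "connected (- (closure (inside curve) \<union> closure (inside (path_image k \<union> path_image h))))"
proof (rule Janiszewski_connected)
  interpret KH: internally_disjoint_arcs p q k h by (rule kh)
  show "compact (closure (inside curve))" "closed (closure (inside KH.curve))"
    using bounded_inside_curve by (simp_all add: compact_closure)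
  show "connected (closure (inside curve) \<inter> closure (inside KH.curve))"
    using meet arc_h arc_imp_path connected_path_image by metis
  have "- closure (inside curve) = outside curve" "- closure (inside KH.curve) = outside KH.curve"
    unfolding closure_inside_curve KH.closure_inside_curve by (auto simp: outside_inside)
  then show "connected (- closure (inside curve))" "connected (- closure (inside KH.curve))"
    using connected_outside_curve KH.connected_outside_curve by simp_all
qed

text \<open>
  The closed regions bounded by \<open>g \<union> d\<close> and \<open>h \<union> d\<close> would meet only along \<open>d\<close>, so by
  Janiszewski's theorem their common complement would be connected, although it contains the inside
  of \<open>g \<union> h\<close>, meets its outside and misses \<open>g \<union> h\<close>.
\<close>

lemma three_arcs_not_mutually_outside:
  assumes gd: "internally_disjoint_arcs p q g d" and hd: "internally_disjoint_arcs p q h d"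
    and d_out: "path_image d - {p, q} \<subseteq> outside curve"
    and h_out: "path_image h - {p, q} \<subseteq> outside (path_image g \<union> path_image d)"
    and g_out: "path_image g - {p, q} \<subseteq> outside (path_image h \<union> path_image d)"
  shows False
proof -
  interpret GD: internally_disjoint_arcs p q g d by (rule gd)
  interpret HD: internally_disjoint_arcs p q h d by (rule hd)
  obtain zg where zg: "zg \<in> path_image g - {p, q}"
    using open_arc(2) by blast
  obtain zh where zh: "zh \<in> path_image h - {p, q}"
    using internally_disjoint_arcs.open_arc(2)[OF swap] by blast
  have "inside curve \<inter> path_image d = {}"
    using d_out ends_in_images inside_no_overlap[of curve] inside_Int_outside[of curve] by blast
  then have inside_off: "inside curve \<inter> GD.curve = {}" "inside curve \<inter> HD.curve = {}"
    using inside_no_overlap[of curve] by (metis Int_Un_distrib Un_empty)+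
  have GD_off: "inside GD.curve \<inter> HD.curve = {}"
    using h_out GD.ends_in_images inside_no_overlap[of GD.curve] inside_Int_outside[of GD.curve] by blast
  have HD_off: "inside HD.curve \<inter> GD.curve = {}"
    using g_out HD.ends_in_images inside_no_overlap[of HD.curve] inside_Int_outside[of HD.curve] by blast
  have in_GD: "inside curve \<subseteq> outside GD.curve"
    using GD.subset_outside_if_closure_meets[OF connected_inside_curve inside_off(1), of zh]
      zh h_out closure_inside_curve by blast
  have in_HD: "inside curve \<subseteq> outside HD.curve"
    using HD.subset_outside_if_closure_meets[OF connected_inside_curve inside_off(2), of zg]
      zg g_out closure_inside_curve by blast
  have "inside GD.curve \<subseteq> outside HD.curve"
    using HD.subset_outside_if_closure_meets[OF GD.connected_inside_curve GD_off, of zg]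
      zg g_out GD.closure_inside_curve by blast
  then have "inside GD.curve \<inter> inside HD.curve = {}"
    using inside_Int_outside[of HD.curve] by blast
  moreover have "GD.curve \<inter> HD.curve = path_image d"
    using arcs_meet GD.ends_in_images by auto
  ultimately have "closure (inside GD.curve) \<inter> closure (inside HD.curve) = path_image d"
    unfolding GD.closure_inside_curve HD.closure_inside_curve using GD_off HD_off by blast
  define W where "W = - (closure (inside GD.curve) \<union> closure (inside HD.curve))"
  have "connected W"
    unfolding W_def by (rule GD.connected_Compl_closed_regions) fact+
  moreover have "W \<inter> curve = {}"
    unfolding W_def GD.closure_inside_curve HD.closure_inside_curve by blast
  moreover have "inside curve \<subseteq> W"
    using in_GD in_HD GD.closure_inside_curve HD.closure_inside_curve
      inside_Int_outside[of GD.curve] inside_Int_outside[of HD.curve]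
      outside_no_overlap[of GD.curve] outside_no_overlap[of HD.curve]
    unfolding W_def by blast
  moreover have "\<not> outside curve \<subseteq> - W"
    using unbounded_outside_curve bounded_subset GD.bounded_inside_curve HD.bounded_inside_curve
    unfolding W_def by (metis bounded_Un bounded_closure double_complement)
  ultimately show False
    using connected_side[of W] inside_curve_nonempty inside_Int_outside[of curve] by blast
qed

lemma theta_outside:
  assumes gd: "internally_disjoint_arcs p q g d" and hd: "internally_disjoint_arcs p q h d"
    and d_out: "path_image d - {p, q} \<subseteq> outside curve"
  shows "path_image h - {p, q} \<subseteq> inside (path_image g \<union> path_image d) \<or>
         path_image g - {p, q} \<subseteq> inside (path_image h \<union> path_image d)"
proof -
  interpret GD: internally_disjoint_arcs p q g d by (rule gd)
  interpret HD: internally_disjoint_arcs p q h d by (rule hd)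
  have "path_image h - {p, q} \<subseteq> inside GD.curve \<or> path_image h - {p, q} \<subseteq> outside GD.curve"
    using GD.connected_side internally_disjoint_arcs.open_arc(1)[OF swap] arcs_meet HD.arcs_meet
    by blast
  moreover have "path_image g - {p, q} \<subseteq> inside HD.curve \<or> path_image g - {p, q} \<subseteq> outside HD.curve"
    using HD.connected_side open_arc(1) arcs_meet GD.arcs_meet by blast
  ultimately show ?thesis
    using three_arcs_not_mutually_outside[OF gd hd d_out] by blast
qed

lemma outside_chord_crosses_if_arc_inside:
  assumes gd: "internally_disjoint_arcs p q g d" and hd: "internally_disjoint_arcs p q h d"
    and e: "arc e" "pathstart e = x" "pathfinish e = y"
    and x: "x \<in> path_image g" "x \<notin> path_image h" and y: "y \<in> path_image h" "y \<notin> path_image g"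
    and ed: "path_image e \<inter> path_image d = {}"
    and h_in: "path_image h - {p, q} \<subseteq> inside (path_image g \<union> path_image d)"
    and e_out: "path_image e - {x, y} \<subseteq> outside curve"
  shows False
proof -
  interpret GD: internally_disjoint_arcs p q g d by (rule gd)
  interpret DH: internally_disjoint_arcs p q d h
    using internally_disjoint_arcs.swap[OF hd] .
  have "path_image h \<inter> inside GD.curve \<noteq> {}"
    using h_in internally_disjoint_arcs.open_arc(2)[OF swap] by blast
  then have split: "inside curve \<union> inside DH.curve \<union> (path_image h - {p, q}) = inside GD.curve"
    using GD.split_inside_by_arc[OF internally_disjoint_arcs_axioms DH.internally_disjoint_arcs_axioms]
    by blast
  define E where "E = path_image e - {x, y}"
  have E: "connected E" "path_image e \<subseteq> closure E"
    using connected_simple_path_endless[OF arc_imp_simple_path] arc_image_subset_closure_endless e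
    unfolding E_def by auto
  have x_e: "x \<in> path_image e" and y_e: "y \<in> path_image e"
    using e pathstart_in_path_image pathfinish_in_path_image by metis+
  have "E \<inter> GD.curve = {}"
    using e_out ed outside_no_overlap[of curve] unfolding E_def by blast
  then consider "E \<subseteq> inside GD.curve" | "E \<subseteq> outside GD.curve"
    using GD.connected_side E(1) by blast
  then show False
  proof cases
    case 1
    then have "E \<subseteq> inside DH.curve"
      using split e_out outside_no_overlap[of curve] inside_Int_outside[of curve] unfolding E_def by blast
    then have "x \<in> inside DH.curve \<union> DH.curve"
      using E(2) x_e closure_mono DH.closure_inside_curve by blast
    then show False
      using x ed x_e split inside_no_overlap[of GD.curve] by blast
  next
    case 2
    then have "y \<in> outside GD.curve \<union> GD.curve"
      using E(2) y_e closure_mono GD.closure_outside_curve by blast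
    moreover have "y \<in> inside GD.curve"
      using y h_in ends_in_images by blast
    ultimately show False
      using y ed y_e inside_Int_outside[of GD.curve] inside_no_overlap[of GD.curve] by blast
  qed
qed

lemma interleaved_chords_cross:
  assumes gd: "internally_disjoint_arcs p q g d" and hd: "internally_disjoint_arcs p q h d"
    and e: "arc e" "pathstart e = x" "pathfinish e = y"
    and x: "x \<in> path_image g" "x \<notin> path_image h" and y: "y \<in> path_image h" "y \<notin> path_image g"
    and ed: "path_image e \<inter> path_image d = {}"
    and same_side: "(path_image d - {p, q} \<subseteq> inside curve \<and> path_image e - {x, y} \<subseteq> inside curve) \<or>
      (path_image d - {p, q} \<subseteq> outside curve \<and> path_image e - {x, y} \<subseteq> outside curve)"
  shows False
  using same_side
proof (elim disjE conjE)
  assume d_in: "path_image d - {p, q} \<subseteq> inside curve" and e_in: "path_image e - {x, y} \<subseteq> inside curve"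
  interpret GD: internally_disjoint_arcs p q g d by (rule gd)
  interpret HD: internally_disjoint_arcs p q h d by (rule hd)
  interpret DG: internally_disjoint_arcs p q d g using GD.swap .
  have "path_image d \<inter> inside curve \<noteq> {}"
    using d_in DG.open_arc(2) by blast
  note split = split_inside_by_arc[OF gd hd this]
  define E where "E = path_image e - {x, y}"
  have E: "connected E" "path_image e \<subseteq> closure E"
    using connected_simple_path_endless[OF arc_imp_simple_path] arc_image_subset_closure_endless e
    unfolding E_def by auto
  have x_e: "x \<in> path_image e" and y_e: "y \<in> path_image e"
    using e pathstart_in_path_image pathfinish_in_path_image by metis+
  have "E \<subseteq> inside GD.curve \<union> inside HD.curve"
    using e_in split(2) ed unfolding E_def by blast
  then consider "E \<subseteq> inside GD.curve" | "E \<subseteq> inside HD.curve"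
    using connectedD[OF E(1) GD.open_inside_curve HD.open_inside_curve] split(1) by blast
  then show False
  proof cases
    case 1
    then have "y \<in> inside GD.curve \<union> GD.curve"
      using E(2) y_e closure_mono GD.closure_inside_curve by blast
    then show False
      using y ed y_e split(2) inside_no_overlap[of curve] by blast
  next
    case 2
    then have "x \<in> inside HD.curve \<union> HD.curve"
      using E(2) x_e closure_mono HD.closure_inside_curve by blast
    then show False
      using x ed x_e split(2) inside_no_overlap[of curve] by blast
  qed
next
  assume d_out: "path_image d - {p, q} \<subseteq> outside curve" and e_out: "path_image e - {x, y} \<subseteq> outside curve"
  interpret GH: internally_disjoint_arcs p q h g by (rule swap)
  consider "path_image h - {p, q} \<subseteq> inside (path_image g \<union> path_image d)"
    | "path_image g - {p, q} \<subseteq> inside (path_image h \<union> path_image d)"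
    using theta_outside[OF gd hd d_out] by blast
  then show False
  proof cases
    case 1
    then show False
      using outside_chord_crosses_if_arc_inside[OF gd hd e x y ed _ e_out] by blast
  next
    case 2
    have "path_image (reversepath e) - {y, x} \<subseteq> outside GH.curve"
      using e_out by (auto simp: Un_commute)
    then show False
      using GH.outside_chord_crosses_if_arc_inside[OF hd gd arc_reversepath[OF e(1)] _ _ y x _ 2] e ed
      by simp
  qed
qed

end

section \<open>Arcs along a drawn cycle\<close>

text \<open>The value at \<open>0\<close> is junk: a chain always consists of at least one arc.\<close>

fun join_arcs :: "(nat \<Rightarrow> real \<Rightarrow> complex) \<Rightarrow> nat \<Rightarrow> real \<Rightarrow> complex" where
  "join_arcs f 0 = f 0"
| "join_arcs f (Suc 0) = f 0"
| "join_arcs f (Suc (Suc m)) = join_arcs f (Suc m) +++ f (Suc m)"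

lemma arc_join_arcs:
  fixes f :: "nat \<Rightarrow> real \<Rightarrow> complex" and z :: "nat \<Rightarrow> complex"
  assumes "1 \<le> L"
    and arcs: "\<And>t. t < L \<Longrightarrow> arc (f t) \<and> pathstart (f t) = z t \<and> pathfinish (f t) = z (Suc t)"
    and meet: "\<And>t l. t < l \<Longrightarrow> l < L \<Longrightarrow>
       path_image (f t) \<inter> path_image (f l) \<subseteq> (if l = Suc t then {z l} else {})"
  shows "arc (join_arcs f L) \<and> pathstart (join_arcs f L) = z 0 \<and> pathfinish (join_arcs f L) = z L \<and>
         path_image (join_arcs f L) = (\<Union>t<L. path_image (f t))"
  using assms(1) arcs meet
proof (induction L rule: nat_induct_at_least)
  case base
  from base(1)[of 0] show ?case by (simp add: lessThan_Suc)
next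
  case (Suc L)
  have IH: "arc (join_arcs f L) \<and> pathstart (join_arcs f L) = z 0 \<and> pathfinish (join_arcs f L) = z L \<and>
         path_image (join_arcs f L) = (\<Union>t<L. path_image (f t))"
  proof (rule Suc.IH)
    show "arc (f t) \<and> pathstart (f t) = z t \<and> pathfinish (f t) = z (Suc t)" if "t < L" for t
      using Suc.prems(1)[of t] that by simp
    show "path_image (f t) \<inter> path_image (f l) \<subseteq> (if l = Suc t then {z l} else {})"
      if "t < l" "l < L" for t l
      using Suc.prems(2)[of t l] that by simp
  qed
  obtain m where m: "L = Suc m" using Suc.hyps by (cases L) auto
  have fL: "arc (f L) \<and> pathstart (f L) = z L \<and> pathfinish (f L) = z (Suc L)"
    using Suc.prems(1)[of L] by simp
  have "path_image (f t) \<inter> path_image (f L) \<subseteq> {z L}" if "t < L" for t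
    using Suc.prems(2)[of t L] that by (simp split: if_splits)
  then have "(\<Union>t<L. path_image (f t)) \<inter> path_image (f L) \<subseteq> {z L}"
    by blast
  then have meet_last: "path_image (join_arcs f L) \<inter> path_image (f L) \<subseteq> {pathstart (f L)}"
    using IH fL by simp
  have "arc (join_arcs f L +++ f L)"
    using arc_join[of "join_arcs f L" "f L"] IH fL meet_last by simp
  moreover have "path_image (join_arcs f L +++ f L) = (\<Union>t<Suc L. path_image (f t))"
    using IH fL by (simp add: path_image_join lessThan_Suc Un_commute)
  moreover have "join_arcs f (Suc L) = join_arcs f L +++ f L"
    using m by simp
  ultimately show ?case
    using IH fL by simp
qed

definition cyc_succ :: "nat \<Rightarrow> nat \<Rightarrow> nat" where
  "cyc_succ n m = (if m < n then Suc m else 1)"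

definition cyc_shift :: "nat \<Rightarrow> nat \<Rightarrow> nat \<Rightarrow> nat" where
  "cyc_shift n a t = (if a + t \<le> n then a + t else a + t - n)"

lemma cyc_succ_range: "m \<in> {1..n} \<Longrightarrow> cyc_succ n m \<in> {1..n}"
  by (auto simp: cyc_succ_def)

lemma cyc_shift_range: "a \<in> {1..n} \<Longrightarrow> t < n \<Longrightarrow> cyc_shift n a t \<in> {1..n}"
  by (auto simp: cyc_shift_def)

lemma inj_on_cyc_shift: "a \<in> {1..n} \<Longrightarrow> inj_on (cyc_shift n a) {0..<n}"
  unfolding inj_on_def cyc_shift_def by auto

lemma cyc_succ_shift:
  "a \<in> {1..n} \<Longrightarrow> Suc t < n \<Longrightarrow> cyc_succ n (cyc_shift n a t) = cyc_shift n a (Suc t)"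
  by (auto simp: cyc_shift_def cyc_succ_def)

lemma cyc_shift_image:
  assumes "a \<in> {1..n}" "L \<le> n"
  shows "cyc_shift n a ` {0..<L} = {a..<a + L} \<inter> {..n} \<union> {1..<a + L - n}"
proof (intro equalityI subsetI)
  fix w assume w: "w \<in> {a..<a + L} \<inter> {..n} \<union> {1..<a + L - n}"
  show "w \<in> cyc_shift n a ` {0..<L}"
  proof (cases "a \<le> w")
    case True
    then have "w = cyc_shift n a (w - a)" "w - a \<in> {0..<L}"
      using w assms by (auto simp: cyc_shift_def)
    then show ?thesis by blast
  next
    case False
    then have "w = cyc_shift n a (w + n - a)" "w + n - a \<in> {0..<L}"
      using w assms by (auto simp: cyc_shift_def)
    then show ?thesis by blast
  qed
qed (use assms in \<open>auto simp: cyc_shift_def\<close>)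

locale drawn_cycle =
  fixes n :: nat and P :: "nat \<Rightarrow> complex" and G :: "nat \<Rightarrow> real \<Rightarrow> complex"
  assumes edge_arc: "\<And>m. m \<in> {1..n} \<Longrightarrow> arc (G m)"
    and edge_start: "\<And>m. m \<in> {1..n} \<Longrightarrow> pathstart (G m) = P m"
    and edge_finish: "\<And>m. m \<in> {1..n} \<Longrightarrow> pathfinish (G m) = P (cyc_succ n m)"
    and vertex_on_edge: "\<And>m w. m \<in> {1..n} \<Longrightarrow> w \<in> {1..n} \<Longrightarrow> P w \<in> path_image (G m) \<Longrightarrow>
      w = m \<or> w = cyc_succ n m"
    and edges_meet: "\<And>m m'. m \<in> {1..n} \<Longrightarrow> m' \<in> {1..n} \<Longrightarrow> m \<noteq> m' \<Longrightarrow>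
      path_image (G m) \<inter> path_image (G m') \<subseteq> P ` ({m, cyc_succ n m} \<inter> {m', cyc_succ n m'})"
begin

abbreviation cycle_image :: "complex set" where
  "cycle_image \<equiv> \<Union>m\<in>{1..n}. path_image (G m)"

definition cycle_arc :: "nat \<Rightarrow> nat \<Rightarrow> real \<Rightarrow> complex" where
  "cycle_arc a L = join_arcs (\<lambda>t. G (cyc_shift n a t)) L"

lemma cycle_arc:
  assumes a: "a \<in> {1..n}" and L: "1 \<le> L" "L < n"
  shows "arc (cycle_arc a L) \<and> pathstart (cycle_arc a L) = P a \<and>
    pathfinish (cycle_arc a L) = P (cyc_shift n a L) \<and>
    path_image (cycle_arc a L) = (\<Union>t<L. path_image (G (cyc_shift n a t)))"
proof -
  have inj: "inj_on (cyc_shift n a) {0..<n}"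
    using inj_on_cyc_shift[OF a] .
  have "arc (cycle_arc a L) \<and> pathstart (cycle_arc a L) = P (cyc_shift n a 0) \<and>
    pathfinish (cycle_arc a L) = P (cyc_shift n a L) \<and>
    path_image (cycle_arc a L) = (\<Union>t<L. path_image (G (cyc_shift n a t)))"
    unfolding cycle_arc_def
  proof (rule arc_join_arcs[OF L(1)])
    fix t assume t: "t < L"
    have "cyc_shift n a t \<in> {1..n}" "cyc_succ n (cyc_shift n a t) = cyc_shift n a (Suc t)"
      using cyc_shift_range[OF a] cyc_succ_shift[OF a] t L by simp_all
    then show "arc (G (cyc_shift n a t)) \<and> pathstart (G (cyc_shift n a t)) = P (cyc_shift n a t) \<and>
        pathfinish (G (cyc_shift n a t)) = P (cyc_shift n a (Suc t))"
      using edge_arc edge_start edge_finish by simp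
  next
    fix t l assume tl: "t < l" "l < L"
    let ?s = "cyc_shift n a"
    have range: "?s t \<in> {1..n}" "?s l \<in> {1..n}"
      using cyc_shift_range[OF a] tl L by simp_all
    have succ: "cyc_succ n (?s t) = ?s (Suc t)" "cyc_succ n (?s l) = ?s (Suc l)"
      using cyc_succ_shift[OF a] tl L by simp_all
    have "{?s t, ?s (Suc t)} \<inter> {?s l, ?s (Suc l)} \<subseteq> (if l = Suc t then {?s l} else {})"
      using inj tl L by (auto simp: inj_on_eq_iff)
    moreover have "?s t \<noteq> ?s l"
      using inj tl L by (auto simp: inj_on_eq_iff)
    ultimately have "P ` ({?s t, cyc_succ n (?s t)} \<inter> {?s l, cyc_succ n (?s l)}) \<subseteq>
        (if l = Suc t then {P (?s l)} else {})"
      unfolding succ by auto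
    then show "path_image (G (?s t)) \<inter> path_image (G (?s l)) \<subseteq>
        (if l = Suc t then {P (?s l)} else {})"
      using edges_meet[OF range \<open>?s t \<noteq> ?s l\<close>] by (rule order_trans[rotated])
  qed
  moreover have "cyc_shift n a 0 = a"
    using a by (simp add: cyc_shift_def)
  ultimately show ?thesis by simp
qed

lemma path_image_cycle_arc:
  assumes "a \<in> {1..n}" "1 \<le> L" "L < n"
  shows "path_image (cycle_arc a L) = (\<Union>t<L. path_image (G (cyc_shift n a t)))"
  using cycle_arc[OF assms] by blast

lemma vertices_on_cycle_arc:
  assumes a: "a \<in> {1..n}" and L: "1 \<le> L" "L < n"
  shows "{w \<in> {1..n}. P w \<in> path_image (cycle_arc a L)} = cyc_shift n a ` {0..<Suc L}"
proof (intro equalityI subsetI)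
  fix w assume "w \<in> {w \<in> {1..n}. P w \<in> path_image (cycle_arc a L)}"
  then obtain t where t: "t < L" "P w \<in> path_image (G (cyc_shift n a t))" "w \<in> {1..n}"
    using path_image_cycle_arc[OF a L] by auto
  then have "w = cyc_shift n a t \<or> w = cyc_shift n a (Suc t)"
    using vertex_on_edge[OF cyc_shift_range[OF a] t(3,2)] cyc_succ_shift[OF a] L by simp
  then show "w \<in> cyc_shift n a ` {0..<Suc L}"
    using t by auto
next
  fix w assume "w \<in> cyc_shift n a ` {0..<Suc L}"
  then obtain t where t: "t \<le> L" "w = cyc_shift n a t" by (auto simp: less_Suc_eq_le)
  have "w \<in> {1..n}"
    using t cyc_shift_range[OF a] L by simp
  moreover have "P w \<in> path_image (cycle_arc a L)"
  proof (cases "t = L")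
    case True
    then show ?thesis using cycle_arc[OF a L] t pathfinish_in_path_image by metis
  next
    case False
    then have "P w \<in> path_image (G (cyc_shift n a t))"
      using pathstart_in_path_image[of "G w"] edge_start[OF cyc_shift_range[OF a]] t L by simp
    moreover have "t < L"
      using t False by simp
    ultimately show ?thesis
      using path_image_cycle_arc[OF a L] by blast
  qed
  ultimately show "w \<in> {w \<in> {1..n}. P w \<in> path_image (cycle_arc a L)}" by blast
qed

lemma cycle_arcs_meet:
  assumes a1: "a1 \<in> {1..n}" and L1: "1 \<le> L1" "L1 < n"
    and a2: "a2 \<in> {1..n}" and L2: "1 \<le> L2" "L2 < n"
    and no_common_edge: "cyc_shift n a1 ` {0..<L1} \<inter> cyc_shift n a2 ` {0..<L2} = {}"
  shows "path_image (cycle_arc a1 L1) \<inter> path_image (cycle_arc a2 L2) \<subseteq> P ` {1..n}"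
proof
  fix z assume "z \<in> path_image (cycle_arc a1 L1) \<inter> path_image (cycle_arc a2 L2)"
  then obtain t1 t2 where t: "t1 < L1" "t2 < L2"
    and z: "z \<in> path_image (G (cyc_shift n a1 t1)) \<inter> path_image (G (cyc_shift n a2 t2))"
    using path_image_cycle_arc[OF a1 L1] path_image_cycle_arc[OF a2 L2] by blast
  have range: "cyc_shift n a1 t1 \<in> {1..n}" "cyc_shift n a2 t2 \<in> {1..n}"
    using cyc_shift_range[OF a1] cyc_shift_range[OF a2] t L1 L2 by simp_all
  have ne: "cyc_shift n a1 t1 \<noteq> cyc_shift n a2 t2"
    using no_common_edge t by (metis IntI atLeastLessThan_iff empty_iff imageI zero_le)
  obtain w where "w \<in> {cyc_shift n a1 t1, cyc_succ n (cyc_shift n a1 t1)}" "z = P w"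
    using subsetD[OF edges_meet[OF range ne] z] by blast
  then show "z \<in> P ` {1..n}"
    using range(1) cyc_succ_range[OF range(1)] by blast
qed

lemma split_cycle:
  assumes ik: "1 \<le> i" "i < k" "k \<le> n"
  obtains c1 c2 where "internally_disjoint_arcs (P i) (P k) c1 c2"
    "path_image c1 \<union> path_image c2 = cycle_image"
    "{w \<in> {1..n}. P w \<in> path_image c1} = {i..k}"
    "{w \<in> {1..n}. P w \<in> path_image c2} = {1..i} \<union> {k..n}"
proof -
  define L1 where "L1 = k - i"
  define L2 where "L2 = n - k + i"
  have i: "i \<in> {1..n}" and k: "k \<in> {1..n}" and L1: "1 \<le> L1" "L1 < n" and L2: "1 \<le> L2" "L2 < n"
    using ik unfolding L1_def L2_def by auto
  define c1 where "c1 = cycle_arc i L1"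
  \<comment> \<open>\<open>c2\<close> is the arc \<open>k, \<dots>, n, 1, \<dots>, i\<close> traversed backwards.\<close>
  define c2 where "c2 = reversepath (cycle_arc k L2)"
  have c1: "arc c1" "pathstart c1 = P i" "pathfinish c1 = P k"
    using cycle_arc[OF i L1] ik unfolding c1_def L1_def cyc_shift_def by auto
  have c2: "arc c2" "pathstart c2 = P i" "pathfinish c2 = P k"
    using cycle_arc[OF k L2] ik unfolding c2_def L2_def cyc_shift_def by (auto simp: arc_reversepath)
  have sums: "i + L1 = k" "k + L2 = n + i"
    using ik unfolding L1_def L2_def by simp_all
  have edges1: "cyc_shift n i ` {0..<L1} = {i..<k}"
    unfolding cyc_shift_image[OF i less_imp_le[OF L1(2)]] sums using ik by auto
  have edges2: "cyc_shift n k ` {0..<L2} = {k..n} \<union> {1..<i}"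
    unfolding cyc_shift_image[OF k less_imp_le[OF L2(2)]] sums using ik by auto
  have verts1: "{w \<in> {1..n}. P w \<in> path_image c1} = {i..k}"
    unfolding c1_def vertices_on_cycle_arc[OF i L1] cyc_shift_image[OF i Suc_leI[OF L1(2)]]
    using sums ik by auto
  have verts2: "{w \<in> {1..n}. P w \<in> path_image c2} = {1..i} \<union> {k..n}"
    unfolding c2_def path_image_reversepath vertices_on_cycle_arc[OF k L2]
      cyc_shift_image[OF k Suc_leI[OF L2(2)]]
    using sums ik by auto
  have "{i..<k} \<inter> ({k..n} \<union> {1..<i}) = {}"
    by auto
  then have "path_image c1 \<inter> path_image c2 \<subseteq> P ` {1..n}"
    using cycle_arcs_meet[OF i L1 k L2] unfolding edges1 edges2 c1_def c2_def path_image_reversepath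
    by blast
  then have "path_image c1 \<inter> path_image c2 \<subseteq> P ` ({i..k} \<inter> ({1..i} \<union> {k..n}))"
    using verts1 verts2 by blast
  also have "\<dots> = {P i, P k}"
    using ik by auto
  finally have "path_image c1 \<inter> path_image c2 = {P i, P k}"
    using c1 c2 pathstart_in_path_image[of c1] pathstart_in_path_image[of c2]
      pathfinish_in_path_image[of c1] pathfinish_in_path_image[of c2] by auto
  then have "internally_disjoint_arcs (P i) (P k) c1 c2"
    unfolding internally_disjoint_arcs_def using c1 c2 by blast
  moreover have "path_image c1 \<union> path_image c2 =
      (\<Union>m \<in> cyc_shift n i ` {0..<L1} \<union> cyc_shift n k ` {0..<L2}. path_image (G m))"
    unfolding c1_def c2_def path_image_reversepath path_image_cycle_arc[OF i L1]
      path_image_cycle_arc[OF k L2] by auto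
  moreover have "cyc_shift n i ` {0..<L1} \<union> cyc_shift n k ` {0..<L2} = {1..n}"
    unfolding edges1 edges2 using ik by auto
  ultimately show ?thesis
    using that verts1 verts2 by simp
qed

lemma interleaved_chords_on_same_side:
  assumes ij: "1 \<le> i" "i < j" "j < k" "k < l" "l \<le> n"
    and d: "arc d" "pathstart d = P i" "pathfinish d = P k"
    and d_meets: "\<And>m. m \<in> {1..n} \<Longrightarrow> path_image d \<inter> path_image (G m) \<subseteq> {P i, P k}"
    and e: "arc e" "pathstart e = P j" "pathfinish e = P l"
    and ed: "path_image e \<inter> path_image d = {}"
    and same_side:
      "(path_image d - {P i, P k} \<subseteq> interior (cycle_image \<union> inside cycle_image) \<and>
        path_image e - {P j, P l} \<subseteq> interior (cycle_image \<union> inside cycle_image)) \<or>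
       (path_image d - {P i, P k} \<subseteq> - (cycle_image \<union> inside cycle_image) \<and>
        path_image e - {P j, P l} \<subseteq> - (cycle_image \<union> inside cycle_image))"
  shows False
proof -
  obtain c1 c2 where C: "internally_disjoint_arcs (P i) (P k) c1 c2"
    and image: "path_image c1 \<union> path_image c2 = cycle_image"
    and verts1: "{w \<in> {1..n}. P w \<in> path_image c1} = {i..k}"
    and verts2: "{w \<in> {1..n}. P w \<in> path_image c2} = {1..i} \<union> {k..n}"
    using split_cycle[of i k] ij by auto
  interpret C: internally_disjoint_arcs "P i" "P k" c1 c2
    by (rule C)
  have "path_image d \<inter> cycle_image \<subseteq> {P i, P k}"
    using d_meets by blast
  then have "path_image d \<inter> path_image c1 \<subseteq> {P i, P k}" "path_image d \<inter> path_image c2 \<subseteq> {P i, P k}"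
    using image by blast+
  then have chord: "internally_disjoint_arcs (P i) (P k) c1 d" "internally_disjoint_arcs (P i) (P k) c2 d"
    unfolding internally_disjoint_arcs_def
    using C.arc_g C.arc_h C.g_ends C.h_ends C.ends_in_images d
      pathstart_in_path_image[of d] pathfinish_in_path_image[of d] by auto
  have "P w \<in> path_image c1 \<longleftrightarrow> w \<in> {i..k}" "P w \<in> path_image c2 \<longleftrightarrow> w \<in> {1..i} \<union> {k..n}"
    if "w \<in> {1..n}" for w
    using verts1 verts2 that by blast+
  then have "P j \<in> path_image c1" "P j \<notin> path_image c2" "P l \<in> path_image c2" "P l \<notin> path_image c1"
    using ij by auto
  moreover have "(path_image d - {P i, P k} \<subseteq> inside C.curve \<and> path_image e - {P j, P l} \<subseteq> inside C.curve) \<or>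
      (path_image d - {P i, P k} \<subseteq> outside C.curve \<and> path_image e - {P j, P l} \<subseteq> outside C.curve)"
    using same_side unfolding image[symmetric] C.interior_curve_Un_inside by (auto simp: outside_inside)
  ultimately show False
    using C.interleaved_chords_cross[OF chord e] ed by blast
qed

end

section \<open>One-sided Hamiltonian cycles of stacked graphs\<close>

lemma stack_edges_mono: "E \<subseteq> stack_edges E s"
  by (induction s arbitrary: E) (auto, fastforce)

lemma stacked_vertex_adjacent:
  "(w, x, y) \<in> set s \<Longrightarrow> {w, x} \<in> stack_edges E s \<and> {w, y} \<in> stack_edges E s"
proof (induction s arbitrary: E)
  case (Cons t s)
  obtain w' x' y' where t: "t = (w', x', y')" by (cases t) auto
  show ?case
  proof (cases "(w, x, y) = t")
    case True
    then show ?thesis using t stack_edges_mono[of "E \<union> {{w', x'}, {w', y'}}" s] by auto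
  next
    case False
    then have "(w, x, y) \<in> set s" using Cons.prems by auto
    then show ?thesis using Cons.IH t by simp
  qed
qed simp

lemma stacked_over_adjacent:
  assumes "w \<in> stacked_over s {x, y}"
  shows "{x, w} \<in> tt_E a b c s" "{y, w} \<in> tt_E a b c s"
proof -
  obtain x' y' where "(w, x', y') \<in> set s" "{x, y} = {x', y'}"
    using assms unfolding stacked_over_def by blast
  then show "{x, w} \<in> tt_E a b c s" "{y, w} \<in> tt_E a b c s"
    using stacked_vertex_adjacent[of w x' y' s] unfolding tt_E_def
    by (auto simp: doubleton_eq_iff insert_commute)
qed

definition edge_path ::
    "('a \<Rightarrow> complex) \<Rightarrow> ('a set \<Rightarrow> real \<Rightarrow> complex) \<Rightarrow> 'a \<Rightarrow> 'a \<Rightarrow> real \<Rightarrow> complex" where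
  "edge_path pos \<gamma> x y =
    (if pathstart (\<gamma> {x, y}) = pos x then \<gamma> {x, y} else reversepath (\<gamma> {x, y}))"

lemma edge_path:
  assumes pe: "plane_embedding V E pos \<gamma>" and xy: "{x, y} \<in> E"
  shows "arc (edge_path pos \<gamma> x y) \<and> pathstart (edge_path pos \<gamma> x y) = pos x \<and>
    pathfinish (edge_path pos \<gamma> x y) = pos y \<and> path_image (edge_path pos \<gamma> x y) = path_image (\<gamma> {x, y}) \<and>
    path_image (\<gamma> {x, y}) \<inter> pos ` V = {pos x, pos y}"
proof -
  obtain x' y' where e: "{x, y} = {x', y'}" "x' \<noteq> y'" "arc (\<gamma> {x, y})"
    "(pathstart (\<gamma> {x, y}) = pos x' \<and> pathfinish (\<gamma> {x, y}) = pos y') \<or>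
     (pathstart (\<gamma> {x, y}) = pos y' \<and> pathfinish (\<gamma> {x, y}) = pos x')"
    "path_image (\<gamma> {x, y}) \<inter> pos ` V = {pos x', pos y'}"
    using pe xy unfolding plane_embedding_def by metis
  then have ends: "(pathstart (\<gamma> {x, y}) = pos x \<and> pathfinish (\<gamma> {x, y}) = pos y) \<or>
     (pathstart (\<gamma> {x, y}) = pos y \<and> pathfinish (\<gamma> {x, y}) = pos x)"
    and image: "path_image (\<gamma> {x, y}) \<inter> pos ` V = {pos x, pos y}"
    by (auto simp: doubleton_eq_iff)
  have "pos x \<noteq> pos y"
    using arc_distinct_ends[OF e(3)] ends by auto
  then show ?thesis
    using ends e(3) image unfolding edge_path_def by (auto simp: arc_reversepath)
qed

lemma chord_not_in_cycle_edges:
  assumes inj: "inj_on v {1..n}"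
    and ab: "1 \<le> a" "a < b" "b \<le> n" "b \<noteq> Suc a" "\<not> (a = 1 \<and> b = n)"
  shows "{v a, v b} \<notin> cycle_edges v n"
proof
  assume "{v a, v b} \<in> cycle_edges v n"
  then consider k where "1 \<le> k" "k < n" "{v a, v b} = {v k, v (Suc k)}" | "{v a, v b} = {v n, v 1}"
    unfolding cycle_edges_def by blast
  then show False
  proof cases
    case 1
    have mem: "a \<in> {1..n}" "b \<in> {1..n}" "k \<in> {1..n}" "Suc k \<in> {1..n}" using ab 1 by auto
    from 1(3) have "(v a = v k \<and> v b = v (Suc k)) \<or> (v a = v (Suc k) \<and> v b = v k)"
      by (auto simp: doubleton_eq_iff)
    then have "(a = k \<and> b = Suc k) \<or> (a = Suc k \<and> b = k)"
      using inj mem by (metis inj_on_eq_iff)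
    then show False using ab by auto
  next
    case 2
    have mem: "a \<in> {1..n}" "b \<in> {1..n}" "n \<in> {1..n}" "1 \<in> {1..n}" using ab by auto
    from 2 have "(v a = v n \<and> v b = v 1) \<or> (v a = v 1 \<and> v b = v n)"
      by (auto simp: doubleton_eq_iff)
    then have "(a = n \<and> b = 1) \<or> (a = 1 \<and> b = n)"
      using inj mem by (metis inj_on_eq_iff)
    then show False using ab by auto
  qed
qed

lemma cyc_succ_edge_inj:
  "3 \<le> n \<Longrightarrow> m \<in> {1..n} \<Longrightarrow> m' \<in> {1..n} \<Longrightarrow> {m, cyc_succ n m} = {m', cyc_succ n m'} \<Longrightarrow> m = m'"
  by (auto simp: cyc_succ_def doubleton_eq_iff split: if_splits)

lemma cycle_edges_conv:
  assumes "1 \<le> n"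
  shows "cycle_edges v n = (\<lambda>m. {v m, v (cyc_succ n m)}) ` {1..n}"
proof -
  have "{1..n} = insert n {1..<n}"
    using assms by auto
  then show ?thesis
    unfolding cycle_edges_def by (auto simp: cyc_succ_def)
qed

lemma drawn_cycle_of_one_sided_ham_cycle:
  assumes "one_sided_ham_cycle V E pos \<gamma> v n"
  shows "drawn_cycle n (\<lambda>m. pos (v m)) (\<lambda>m. edge_path pos \<gamma> (v m) (v (cyc_succ n m)))"
    and "(\<Union>e\<in>cycle_edges v n. path_image (\<gamma> e)) =
      (\<Union>m\<in>{1..n}. path_image (edge_path pos \<gamma> (v m) (v (cyc_succ n m))))"
proof -
  have n: "3 \<le> n" and v: "bij_betw v {1..n} V" and cycle_E: "cycle_edges v n \<subseteq> E"
    and pe: "plane_embedding V E pos \<gamma>"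
    using assms unfolding one_sided_ham_cycle_def by auto
  have inj_pos_v: "inj_on (\<lambda>m. pos (v m)) {1..n}"
    using v pe unfolding plane_embedding_def bij_betw_def by (auto intro: comp_inj_on[unfolded comp_def])
  have vV: "v m \<in> V" if "m \<in> {1..n}" for m
    using v that bij_betwE by blast
  have edge_in_E: "{v m, v (cyc_succ n m)} \<in> E" if "m \<in> {1..n}" for m
    using cycle_edges_conv[of n v] n that cycle_E by auto
  have edges_meet: "path_image (\<gamma> e) \<inter> path_image (\<gamma> f) \<subseteq> pos ` (e \<inter> f)"
    if "e \<in> E" "f \<in> E" "e \<noteq> f" for e f
    using pe that unfolding plane_embedding_def by blast
  note G = edge_path[OF pe edge_in_E]
  show "(\<Union>e\<in>cycle_edges v n. path_image (\<gamma> e)) =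
      (\<Union>m\<in>{1..n}. path_image (edge_path pos \<gamma> (v m) (v (cyc_succ n m))))"
    using cycle_edges_conv[of n v] n G by (simp add: image_image)
  show "drawn_cycle n (\<lambda>m. pos (v m)) (\<lambda>m. edge_path pos \<gamma> (v m) (v (cyc_succ n m)))"
  proof
    fix m assume m: "m \<in> {1..n}"
    show "arc (edge_path pos \<gamma> (v m) (v (cyc_succ n m)))"
      "pathstart (edge_path pos \<gamma> (v m) (v (cyc_succ n m))) = pos (v m)"
      "pathfinish (edge_path pos \<gamma> (v m) (v (cyc_succ n m))) = pos (v (cyc_succ n m))"
      using G[OF m] by simp_all
    fix w assume w: "w \<in> {1..n}"
      and on_edge: "pos (v w) \<in> path_image (edge_path pos \<gamma> (v m) (v (cyc_succ n m)))"
    then have "pos (v w) \<in> {pos (v m), pos (v (cyc_succ n m))}"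
      using G[OF m] vV[OF w] by blast
    then show "w = m \<or> w = cyc_succ n m"
      using inj_on_eq_iff[OF inj_pos_v w m] inj_on_eq_iff[OF inj_pos_v w cyc_succ_range[OF m]] by auto
  next
    fix m m' assume m: "m \<in> {1..n}" and m': "m' \<in> {1..n}" and "m \<noteq> m'"
    let ?e = "{v m, v (cyc_succ n m)}" and ?e' = "{v m', v (cyc_succ n m')}"
    have ends: "{m, cyc_succ n m} \<subseteq> {1..n}" "{m', cyc_succ n m'} \<subseteq> {1..n}"
      using m m' cyc_succ_range by auto
    have inj_v: "inj_on v {1..n}"
      using v bij_betw_def by blast
    have "?e \<noteq> ?e'"
    proof
      assume "?e = ?e'"
      then have "{m, cyc_succ n m} = {m', cyc_succ n m'}"
        using inj_on_image_eq_iff[OF inj_v ends] by simp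
      then show False
        using cyc_succ_edge_inj[OF n m m'] \<open>m \<noteq> m'\<close> by blast
    qed
    then have "path_image (\<gamma> ?e) \<inter> path_image (\<gamma> ?e') \<subseteq> pos ` (?e \<inter> ?e')"
      using edges_meet[OF edge_in_E[OF m] edge_in_E[OF m']] by blast
    also have "?e \<inter> ?e' = v ` ({m, cyc_succ n m} \<inter> {m', cyc_succ n m'})"
      using inj_on_image_Int[OF inj_v ends] by simp
    finally show "path_image (edge_path pos \<gamma> (v m) (v (cyc_succ n m))) \<inter>
        path_image (edge_path pos \<gamma> (v m') (v (cyc_succ n m'))) \<subseteq>
        (\<lambda>m. pos (v m)) ` ({m, cyc_succ n m} \<inter> {m', cyc_succ n m'})"
      using G[OF m] G[OF m'] by (simp add: image_image)
  qed
qed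

definition cycle_region :: "('a set \<Rightarrow> real \<Rightarrow> complex) \<Rightarrow> (nat \<Rightarrow> 'a) \<Rightarrow> nat \<Rightarrow> complex set" where
  "cycle_region \<gamma> v n = (let C = \<Union>e\<in>cycle_edges v n. path_image (\<gamma> e) in C \<union> inside C)"

lemma interleaved_chords_not_on_same_side:
  assumes osh: "one_sided_ham_cycle V E pos \<gamma> v n"
    and ij: "1 \<le> i" "i < j" "j < k" "k < l" "l \<le> n"
    and d: "{v i, v k} \<in> E - cycle_edges v n" and e: "{v j, v l} \<in> E - cycle_edges v n"
    and same_side:
      "(open_edge pos \<gamma> {v i, v k} \<subseteq> interior (cycle_region \<gamma> v n) \<and>
        open_edge pos \<gamma> {v j, v l} \<subseteq> interior (cycle_region \<gamma> v n)) \<or>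
       (open_edge pos \<gamma> {v i, v k} \<subseteq> - cycle_region \<gamma> v n \<and>
        open_edge pos \<gamma> {v j, v l} \<subseteq> - cycle_region \<gamma> v n)"
  shows False
proof -
  let ?P = "\<lambda>m. pos (v m)" and ?G = "\<lambda>m. edge_path pos \<gamma> (v m) (v (cyc_succ n m))"
  interpret drawn_cycle n ?P ?G
    using drawn_cycle_of_one_sided_ham_cycle(1)[OF osh] .
  have region: "cycle_region \<gamma> v n = cycle_image \<union> inside cycle_image"
    unfolding cycle_region_def drawn_cycle_of_one_sided_ham_cycle(2)[OF osh] Let_def ..
  have pe: "plane_embedding V E pos \<gamma>" and v: "bij_betw v {1..n} V" and n: "3 \<le> n"
    using osh unfolding one_sided_ham_cycle_def by auto
  have edges_meet: "path_image (\<gamma> e) \<inter> path_image (\<gamma> f) \<subseteq> pos ` (e \<inter> f)"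
    if "e \<in> E" "f \<in> E" "e \<noteq> f" for e f
    using pe that unfolding plane_embedding_def by blast
  have inj_v: "inj_on v {1..n}"
    using v bij_betw_def by blast
  note chord_d = edge_path[OF pe DiffD1[OF d]] and chord_e = edge_path[OF pe DiffD1[OF e]]
  have "path_image (\<gamma> {v i, v k}) \<inter> path_image (?G m) \<subseteq> {?P i, ?P k}" if m: "m \<in> {1..n}" for m
  proof -
    have "{v m, v (cyc_succ n m)} \<in> E - {{v i, v k}}"
      using cycle_edges_conv[of n v] n m d osh unfolding one_sided_ham_cycle_def by auto
    then show ?thesis
      using edges_meet[OF DiffD1[OF d]] edge_path[OF pe] by fastforce
  qed
  moreover have "{v j, v l} \<inter> {v i, v k} = {}"
    using inj_on_eq_iff[OF inj_v] ij by auto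
  then have "path_image (\<gamma> {v j, v l}) \<inter> path_image (\<gamma> {v i, v k}) = {}"
    using edges_meet[OF DiffD1[OF e] DiffD1[OF d]] by auto
  moreover have "open_edge pos \<gamma> {v i, v k} = path_image (\<gamma> {v i, v k}) - {?P i, ?P k}"
    "open_edge pos \<gamma> {v j, v l} = path_image (\<gamma> {v j, v l}) - {?P j, ?P l}"
    unfolding open_edge_def by simp_all
  ultimately show False
    using interleaved_chords_on_same_side[OF ij, of "edge_path pos \<gamma> (v i) (v k)"
        "edge_path pos \<gamma> (v j) (v l)"] chord_d chord_e same_side
    unfolding region by simp
qed

lemma one_sided_ham_cycle_sides:
  assumes "one_sided_ham_cycle V E pos \<gamma> v n" "k \<in> {2..n}"
  shows "(\<forall>i\<in>{1..<k}. {v i, v k} \<in> E - cycle_edges v n \<longrightarrow>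
            open_edge pos \<gamma> {v i, v k} \<subseteq> interior (cycle_region \<gamma> v n)) \<or>
         (\<forall>i\<in>{1..<k}. {v i, v k} \<in> E - cycle_edges v n \<longrightarrow>
            open_edge pos \<gamma> {v i, v k} \<subseteq> - cycle_region \<gamma> v n)"
  using assms unfolding one_sided_ham_cycle_def cycle_region_def Let_def by blast

lemma card_later_common_neighbours_le_2:
  assumes osh: "one_sided_ham_cycle V E pos \<gamma> v n" and ij: "1 \<le> i" "i < j"
  shows "card {k. j < k \<and> k \<le> n \<and> {v i, v k} \<in> E \<and> {v j, v k} \<in> E} \<le> 2"
proof -
  define K where "K = {k. j < k \<and> k \<le> n \<and> {v i, v k} \<in> E \<and> {v j, v k} \<in> E}"
  define inner where "inner k \<longleftrightarrow> (\<forall>i\<in>{1..<k}. {v i, v k} \<in> E - cycle_edges v n \<longrightarrow>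
      open_edge pos \<gamma> {v i, v k} \<subseteq> interior (cycle_region \<gamma> v n))" for k
  have inj_v: "inj_on v {1..n}"
    using osh unfolding one_sided_ham_cycle_def bij_betw_def by blast
  have side: "open_edge pos \<gamma> {v h, v k} \<subseteq>
      (if inner k then interior (cycle_region \<gamma> v n) else - cycle_region \<gamma> v n)"
    if "k \<in> K" "1 \<le> h" "h < k" "{v h, v k} \<in> E - cycle_edges v n" for h k
    using one_sided_ham_cycle_sides[OF osh, of k] that ij unfolding K_def inner_def by auto
  have "inner k \<noteq> inner l" if kl: "k \<in> K" "l \<in> K" "k < l" for k l
  proof
    assume same: "inner k = inner l"
    have chords: "{v i, v k} \<in> E - cycle_edges v n" "{v j, v l} \<in> E - cycle_edges v n"
      using kl ij chord_not_in_cycle_edges[OF inj_v] unfolding K_def by auto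
    have "j < k" "l \<le> n"
      using kl unfolding K_def by auto
    then show False
      using interleaved_chords_not_on_same_side[OF osh ij \<open>j < k\<close> \<open>k < l\<close> \<open>l \<le> n\<close> chords]
        side[OF \<open>k \<in> K\<close> ij(1) _ chords(1)] side[OF \<open>l \<in> K\<close> _ _ chords(2)] kl ij same
      by (auto split: if_splits)
  qed
  then have "inj_on inner K"
    by (intro linorder_inj_onI') blast
  then show ?thesis
    using card_inj_on_le[of inner K UNIV] unfolding K_def by simp
qed

theorem claim1:
  fixes a b c :: 'a and s :: "('a \<times> 'a \<times> 'a) list" and v :: "nat \<Rightarrow> 'a" and n :: nat
  assumes "is_2tree_construction a b c s"
    and "n = card (tt_V a b c s)"
    and "bij_betw v {1..n} (tt_V a b c s)"
    and "\<exists>pos \<gamma>. one_sided_ham_cycle (tt_V a b c s) (tt_E a b c s \<union> cycle_edges v n) pos \<gamma> v n"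
  shows "\<forall>i j. 1 \<le> i \<longrightarrow> i < j \<longrightarrow> j \<le> n \<longrightarrow> {v i, v j} \<in> tt_E a b c s \<longrightarrow>
           card (X_R v n s i j) \<le> 2"
proof (intro allI impI)
  fix i j :: nat assume ij: "1 \<le> i" "i < j"
  obtain pos \<gamma>
    where osh: "one_sided_ham_cycle (tt_V a b c s) (tt_E a b c s \<union> cycle_edges v n) pos \<gamma> v n"
    using assms(4) by blast
  define K where "K = {k. j < k \<and> k \<le> n \<and>
    {v i, v k} \<in> tt_E a b c s \<union> cycle_edges v n \<and> {v j, v k} \<in> tt_E a b c s \<union> cycle_edges v n}"
  have "X_R v n s i j \<subseteq> v ` K"
  proof
    fix w assume "w \<in> X_R v n s i j"
    then obtain k where "w = v k" "j < k" "k \<le> n" "v k \<in> stacked_over s {v i, v j}"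
      unfolding X_R_def by blast
    then show "w \<in> v ` K"
      using stacked_over_adjacent[of "v k" s "v i" "v j" a b c] unfolding K_def by blast
  qed
  moreover have "finite K"
    unfolding K_def by (rule finite_subset[of _ "{..n}"]) auto
  ultimately have "card (X_R v n s i j) \<le> card K"
    using card_mono card_image_le order_trans finite_imageI by metis
  also have "\<dots> \<le> 2"
    unfolding K_def by (rule card_later_common_neighbours_le_2[OF osh ij])
  finally show "card (X_R v n s i j) \<le> 2" .
qed

end
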